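(* Let $\mathfrak{G}$ be a finite alphabet, and $\mathfrak{s}$ and $\mathfrak{t}$ be two $\mathfrak{G}$-trees such that $\mathfrak{s}\preceq\mathfrak{t}$. As subposets of the $\mathfrak{G}$-prefix poset (resp. of the $(\mathfrak{G}\sqcup\{\lozenge_{|\mathfrak{s}|}\})$-prefix poset for the last one), one has the poset isomorphisms $[\mathfrak{s},\mathfrak{t}] \simeq [\text{leaf},\mathfrak{r}_1]\times\cdots\times[\text{leaf},\mathfrak{r}_{|\mathfrak{s}|}] \simeq [\lozenge_{|\mathfrak{s}|},\ \lozenge_{|\mathfrak{s}|}[\mathfrak{r}_1,\dots,\mathfrak{r}_{|\mathfrak{s}|}]]$, where $(\mathfrak{r}_1,\dots,\mathfrak{r}_{|\mathfrak{s}|})$ is the forest $\mathfrak{t}\setminus\mathfrak{s}$ and "leaf" denotes the tree with no internal node.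
   Context: $\mathfrak{G}$ is a finite alphabet (letters with arities $\geq 1$). A $\mathfrak{G}$-tree is either the leaf (the tree with no internal node) or a root decorated by a letter $\mathtt{a}\in\mathfrak{G}$ with $|\mathtt{a}|$ children that are $\mathfrak{G}$-trees; $|\mathfrak{s}|$ denotes the number of leaves, ordered left to right, and $\mathfrak{s}\circ[\mathfrak{r}_1,\dots,\mathfrak{r}_{|\mathfrak{s}|}]$ grafts each $\mathfrak{r}_i$ onto the $i$-th leaf of $\mathfrak{s}$. The $\mathfrak{G}$-prefix poset is the set of $\mathfrak{G}$-trees ordered by $\mathfrak{s}\preceq\mathfrak{t}$ iff $\mathfrak{t}=\mathfrak{s}\circ[\mathfrak{r}_1,\dots,\mathfrak{r}_{|\mathfrak{s}|}]$ for some $\mathfrak{G}$-trees $\mathfrak{r}_i$; these $\mathfrak{r}_i$ are then unique and form the difference $\mathfrak{t}\setminus\mathfrak{s}$. For a new letter $\lozenge_k$ of arity $k$, $\lozenge_k[\mathfrak{r}_1,\dots,\mathfrak{r}_k]$ is the tree with root decorated by $\lozenge_k$ and children $\mathfrak{r}_1,\dots,\mathfrak{r}_k$, and $\lozenge_k$ alone denotes the corolla (root $\lozenge_k$ with $k$ leaves as children). *)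

theory Defs
  imports Main
begin

text \<open>Planar rooted trees whose internal nodes are decorated by letters; the leaf has no
  internal node. An alphabet is a set of letters G with an arity function ar.\<close>

datatype 'a gtree = Leaf | Node 'a "'a gtree list"

fun is_gtree :: "'a set \<Rightarrow> ('a \<Rightarrow> nat) \<Rightarrow> 'a gtree \<Rightarrow> bool" where
  "is_gtree G ar Leaf = True"
| "is_gtree G ar (Node a cs) =
     (a \<in> G \<and> length cs = ar a \<and> (\<forall>c\<in>set cs. is_gtree G ar c))"

fun nleaves :: "'a gtree \<Rightarrow> nat" where
  "nleaves Leaf = 1"
| "nleaves (Node a cs) = sum_list (map nleaves cs)"

fun graft :: "'a gtree \<Rightarrow> 'a gtree list \<Rightarrow> 'a gtree"
and grafts :: "'a gtree list \<Rightarrow> 'a gtree list \<Rightarrow> 'a gtree list" where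
  "graft Leaf rs = (case rs of [] \<Rightarrow> Leaf | r # _ \<Rightarrow> r)"
| "graft (Node a cs) rs = Node a (grafts cs rs)"
| "grafts [] rs = []"
| "grafts (c # cs) rs = graft c (take (nleaves c) rs) # grafts cs (drop (nleaves c) rs)"

definition prefix_le :: "'a set \<Rightarrow> ('a \<Rightarrow> nat) \<Rightarrow> 'a gtree \<Rightarrow> 'a gtree \<Rightarrow> bool" where
  "prefix_le G ar s t \<longleftrightarrow>
     (\<exists>rs. length rs = nleaves s \<and> (\<forall>r\<in>set rs. is_gtree G ar r) \<and> t = graft s rs)"

definition prefix_interval :: "'a set \<Rightarrow> ('a \<Rightarrow> nat) \<Rightarrow> 'a gtree \<Rightarrow> 'a gtree \<Rightarrow> 'a gtree set" where
  "prefix_interval G ar s t =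
     {u. is_gtree G ar u \<and> prefix_le G ar s u \<and> prefix_le G ar u t}"

text \<open>Alphabet G extended by a fresh letter (None = \<lozenge>_k) of arity k.\<close>
definition ext_alph :: "'a set \<Rightarrow> 'a option set" where
  "ext_alph G = insert None (Some ` G)"

definition ext_ar :: "('a \<Rightarrow> nat) \<Rightarrow> nat \<Rightarrow> 'a option \<Rightarrow> nat" where
  "ext_ar ar k x = (case x of None \<Rightarrow> k | Some a \<Rightarrow> ar a)"

definition diamond :: "'a gtree list \<Rightarrow> 'a option gtree" where
  "diamond rs = Node None (map (map_gtree Some) rs)"

definition corolla :: "nat \<Rightarrow> 'a option gtree" where
  "corolla k = Node None (replicate k Leaf)"

definition poset_iso :: "'x set \<Rightarrow> ('x \<Rightarrow> 'x \<Rightarrow> bool) \<Rightarrow> 'y set \<Rightarrow> ('y \<Rightarrow> 'y \<Rightarrow> bool) \<Rightarrow> bool" where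
  "poset_iso A leA B leB \<longleftrightarrow>
     (\<exists>f. bij_betw f A B \<and> (\<forall>x\<in>A. \<forall>y\<in>A. leA x y \<longleftrightarrow> leB (f x) (f y)))"

definition list_product :: "'x set list \<Rightarrow> 'x list set" where
  "list_product Ps = {us. length us = length Ps \<and> (\<forall>i<length Ps. us ! i \<in> Ps ! i)}"

end

theory Submission imports Defs begin

text \<open>Grafting is injective and associative: (s \<circ> xs) \<circ> zs = s \<circ> (xs \<circ> zs).
  Hence s \<circ> xs \<preceq> s \<circ> ys holds exactly when every ys_i is obtained from xs_i by grafting,
  i.e. when xs \<preceq> ys componentwise, and xs \<mapsto> s \<circ> xs is an isomorphism from the product of
  the intervals [leaf, r_i] onto [s, s \<circ> rs]. Both isomorphisms of the statement are instances
  of this: the second one with s the corolla \<lozenge>_k over the extended alphabet, once G-trees are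
  identified with their images there, an identification that preserves and reflects the
  prefix order.\<close>

lemma poset_iso_sym:
  assumes "poset_iso A leA B leB"
  shows "poset_iso B leB A leA"
proof -
  obtain f where f: "bij_betw f A B" and order: "\<forall>x\<in>A. \<forall>y\<in>A. leA x y \<longleftrightarrow> leB (f x) (f y)"
    using assms unfolding poset_iso_def by blast
  have "leB x y \<longleftrightarrow> leA (inv_into A f x) (inv_into A f y)" if "x \<in> B" "y \<in> B" for x y
    using that order bij_betw_inv_into_right[OF f] bij_betw_apply[OF bij_betw_inv_into[OF f]] by metis
  then show ?thesis
    unfolding poset_iso_def using bij_betw_inv_into[OF f] by blast
qed

lemma poset_iso_trans:
  "poset_iso A leA B leB \<Longrightarrow> poset_iso B leB C leC \<Longrightarrow> poset_iso A leA C leC"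
proof -
  assume "poset_iso A leA B leB" "poset_iso B leB C leC"
  then obtain f g where "bij_betw f A B" "\<forall>x\<in>A. \<forall>y\<in>A. leA x y \<longleftrightarrow> leB (f x) (f y)"
    "bij_betw g B C" "\<forall>x\<in>B. \<forall>y\<in>B. leB x y \<longleftrightarrow> leC (g x) (g y)"
    unfolding poset_iso_def by blast
  then show "poset_iso A leA C leC"
    unfolding poset_iso_def by (intro exI[of _ "g \<circ> f"]) (simp add: bij_betw_trans bij_betw_apply)
qed

lemma poset_iso_list_product:
  assumes len: "length Qs = length Ps"
    and bij: "\<And>i. i < length Ps \<Longrightarrow> bij_betw f (Ps ! i) (Qs ! i)"
    and order: "\<And>i x y. i < length Ps \<Longrightarrow> x \<in> Ps ! i \<Longrightarrow> y \<in> Ps ! i \<Longrightarrow>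
      le x y \<longleftrightarrow> le' (f x) (f y)"
  shows "poset_iso (list_product Ps) (list_all2 le) (list_product Qs) (list_all2 le')"
  unfolding poset_iso_def
proof (intro exI[of _ "map f"] conjI ballI)
  have "inj_on (map f) (list_product Ps)"
  proof (rule inj_onI)
    fix xs ys assume "xs \<in> list_product Ps" "ys \<in> list_product Ps" "map f xs = map f ys"
    then show "xs = ys"
      using bij by (intro nth_equalityI)
        (auto simp: list_product_def bij_betw_def inj_on_def dest: map_eq_imp_length_eq
          | metis nth_map)+
  qed
  moreover have "map f ` list_product Ps = list_product Qs"
  proof (intro equalityI subsetI)
    fix ys assume "ys \<in> map f ` list_product Ps"
    then show "ys \<in> list_product Qs"
      using bij_betw_apply[OF bij] len by (auto simp: list_product_def)
  next
    fix ys assume ys: "ys \<in> list_product Qs"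
    define xs where "xs = map (\<lambda>i. inv_into (Ps ! i) f (ys ! i)) [0..<length Ps]"
    have "ys ! i \<in> f ` (Ps ! i)" if "i < length Ps" for i
      using ys bij[OF that] len that by (simp add: list_product_def bij_betw_def)
    then have "xs \<in> list_product Ps" "map f xs = ys"
      using ys len
      by (auto simp: xs_def list_product_def inv_into_into f_inv_into_f intro: nth_equalityI)
    then show "ys \<in> map f ` list_product Ps" by blast
  qed
  ultimately show "bij_betw (map f) (list_product Ps) (list_product Qs)"
    by (simp add: bij_betw_def)
  fix xs ys assume "xs \<in> list_product Ps" "ys \<in> list_product Ps"
  then show "list_all2 le xs ys \<longleftrightarrow> list_all2 le' (map f xs) (map f ys)"
    using order by (auto simp: list_product_def list_all2_conv_all_nth)
qed

lemma length_grafts [simp]: "length (grafts cs zs) = length cs"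
  by (induction cs arbitrary: zs) auto

lemma nleaves_map_gtree [simp]: "nleaves (map_gtree f a) = nleaves a"
  by (induction a) (simp_all add: o_def cong: map_cong)

lemma map_gtree_graft:
  "map_gtree f (graft a zs) = graft (map_gtree f a) (map (map_gtree f) zs)"
  "map (map_gtree f) (grafts cs zs) = grafts (map (map_gtree f) cs) (map (map_gtree f) zs)"
  by (induction a zs and cs zs rule: graft_grafts.induct)
     (auto split: list.split simp: take_map drop_map)

lemma nleaves_graft:
  "length zs = nleaves a \<Longrightarrow> nleaves (graft a zs) = sum_list (map nleaves zs)"
  "length zs = sum_list (map nleaves cs) \<Longrightarrow>
     sum_list (map nleaves (grafts cs zs)) = sum_list (map nleaves zs)"
proof (induction a zs and cs zs rule: graft_grafts.induct)
  case (1 rs)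
  then show ?case by (cases rs) auto
next
  case (4 c cs rs)
  have "sum_list (map nleaves rs) =
      sum_list (map nleaves (take (nleaves c) rs)) + sum_list (map nleaves (drop (nleaves c) rs))"
    by (metis append_take_drop_id map_append sum_list_append)
  with 4 show ?case by simp
qed auto

lemma is_gtree_graft_iff:
  "length zs = nleaves a \<Longrightarrow>
     is_gtree A ar (graft a zs) \<longleftrightarrow> is_gtree A ar a \<and> (\<forall>z\<in>set zs. is_gtree A ar z)"
  "length zs = sum_list (map nleaves cs) \<Longrightarrow>
     (\<forall>x\<in>set (grafts cs zs). is_gtree A ar x) \<longleftrightarrow>
     (\<forall>c\<in>set cs. is_gtree A ar c) \<and> (\<forall>z\<in>set zs. is_gtree A ar z)"
proof (induction a zs and cs zs rule: graft_grafts.induct)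
  case (1 rs)
  then show ?case by (cases rs) auto
next
  case (4 c cs rs)
  have "set rs = set (take (nleaves c) rs) \<union> set (drop (nleaves c) rs)"
    by (metis append_take_drop_id set_append)
  with 4 show ?case by auto
qed auto

lemma graft_take:
  "nleaves a \<le> n \<Longrightarrow> graft a (take n zs) = graft a zs"
  "sum_list (map nleaves cs) \<le> n \<Longrightarrow> grafts cs (take n zs) = grafts cs zs"
proof (induction a zs and cs zs arbitrary: n and n rule: graft_grafts.induct)
  case (1 rs)
  then show ?case by (cases rs; cases n) auto
next
  case (4 c cs rs)
  then show ?case by (simp add: min_def drop_take)
qed auto

lemma grafts_append:
  "grafts (xs @ ys) zs = grafts xs zs @ grafts ys (drop (sum_list (map nleaves xs)) zs)"
  by (induction xs arbitrary: zs) (auto simp: add.commute)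

lemma graft_graft:
  "length xs = nleaves a \<Longrightarrow> graft (graft a xs) zs = graft a (grafts xs zs)"
  "length xs = sum_list (map nleaves cs) \<Longrightarrow> grafts (grafts cs xs) zs = grafts cs (grafts xs zs)"
proof (induction a xs and cs xs arbitrary: zs and zs rule: graft_grafts.induct)
  case (1 rs)
  then show ?case by (cases rs) (auto simp: length_Suc_conv graft_take(1))
next
  case (4 c cs rs)
  let ?n = "nleaves c" and ?m = "sum_list (map nleaves (take (nleaves c) rs))"
  have len_take: "length (take ?n rs) = ?n"
    and len_drop: "length (drop ?n rs) = sum_list (map nleaves cs)"
    using 4(3) by simp_all
  have "grafts rs zs = grafts (take ?n rs) zs @ grafts (drop ?n rs) (drop ?m zs)"
    using grafts_append[of "take ?n rs" "drop ?n rs" zs] by simp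
  then have take_grafts: "take ?n (grafts rs zs) = grafts (take ?n rs) zs"
    and drop_grafts: "drop ?n (grafts rs zs) = grafts (drop ?n rs) (drop ?m zs)"
    using len_take by (metis append_eq_conv_conj length_grafts)+
  have "graft (graft c (take ?n rs)) (take ?m zs) = graft c (grafts (take ?n rs) zs)"
    using 4(1)[OF len_take, of "take ?m zs"] graft_take(2)[of "take ?n rs" ?m zs] by simp
  with 4(2)[OF len_drop] nleaves_graft(1)[OF len_take] take_grafts drop_grafts
  show ?case by simp
qed auto

lemma graft_inject:
  "length xs = nleaves a \<Longrightarrow> length ys = nleaves a \<Longrightarrow> graft a xs = graft a ys \<Longrightarrow> xs = ys"
  "length xs = sum_list (map nleaves cs) \<Longrightarrow> length ys = sum_list (map nleaves cs) \<Longrightarrow>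
     grafts cs xs = grafts cs ys \<Longrightarrow> xs = ys"
proof (induction a xs and cs xs arbitrary: ys and ys rule: graft_grafts.induct)
  case (1 rs)
  then show ?case by (auto simp: length_Suc_conv)
next
  case (4 c cs rs)
  have "take (nleaves c) rs = take (nleaves c) ys"
    using 4(1)[of "take (nleaves c) ys"] 4(3-5) by simp
  moreover have "drop (nleaves c) rs = drop (nleaves c) ys"
    using 4(2)[of "drop (nleaves c) ys"] 4(3-5) by simp
  ultimately show ?case by (metis append_take_drop_id)
qed auto

lemma prefix_le_Leaf: "is_gtree A ar x \<Longrightarrow> prefix_le A ar Leaf x"
  unfolding prefix_le_def by (intro exI[of _ "[x]"]) auto

lemma is_gtree_prefix: "prefix_le A ar u v \<Longrightarrow> is_gtree B ar' v \<Longrightarrow> is_gtree B ar' u"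
  unfolding prefix_le_def using is_gtree_graft_iff(1) by blast

lemma list_all2_prefix_le_iff_grafts:
  "list_all2 (prefix_le A ar) xs ys \<longleftrightarrow>
     (\<exists>zs. length zs = sum_list (map nleaves xs) \<and> (\<forall>z\<in>set zs. is_gtree A ar z)
       \<and> ys = grafts xs zs)"
proof (induction xs arbitrary: ys)
  case Nil
  then show ?case by simp
next
  case (Cons x xs)
  show ?case
  proof
    assume "list_all2 (prefix_le A ar) (x # xs) ys"
    then obtain y ys' z zs where "ys = y # ys'"
      "length z = nleaves x" "\<forall>r\<in>set z. is_gtree A ar r" "y = graft x z"
      "length zs = sum_list (map nleaves xs)" "\<forall>r\<in>set zs. is_gtree A ar r" "ys' = grafts xs zs"
      using Cons.IH unfolding prefix_le_def by (auto simp: list_all2_Cons1)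
    then show "\<exists>zs. length zs = sum_list (map nleaves (x # xs)) \<and> (\<forall>z\<in>set zs. is_gtree A ar z)
        \<and> ys = grafts (x # xs) zs"
      by (intro exI[of _ "z @ zs"]) auto
  next
    assume "\<exists>zs. length zs = sum_list (map nleaves (x # xs)) \<and> (\<forall>z\<in>set zs. is_gtree A ar z)
        \<and> ys = grafts (x # xs) zs"
    then obtain zs where "length zs = nleaves x + sum_list (map nleaves xs)"
      "\<forall>z\<in>set zs. is_gtree A ar z" "ys = grafts (x # xs) zs"
      by auto
    moreover from this have "list_all2 (prefix_le A ar) xs (grafts xs (drop (nleaves x) zs))"
      unfolding Cons.IH by (intro exI[of _ "drop (nleaves x) zs"]) (auto dest: in_set_dropD)
    ultimately show "list_all2 (prefix_le A ar) (x # xs) ys"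
      unfolding prefix_le_def by (auto intro!: exI[of _ "take (nleaves x) zs"] dest: in_set_takeD)
  qed
qed

lemma prefix_le_graft_graft_iff:
  assumes xs: "length xs = nleaves s" and ys: "length ys = nleaves s"
  shows "prefix_le A ar (graft s xs) (graft s ys) \<longleftrightarrow> list_all2 (prefix_le A ar) xs ys"
proof
  assume "prefix_le A ar (graft s xs) (graft s ys)"
  then obtain zs where zs: "length zs = sum_list (map nleaves xs)" "\<forall>z\<in>set zs. is_gtree A ar z"
    and "graft s ys = graft s (grafts xs zs)"
    unfolding prefix_le_def by (auto simp: graft_graft(1)[OF xs] nleaves_graft(1)[OF xs])
  then have "ys = grafts xs zs"
    using graft_inject(1)[OF ys] xs by simp
  with zs show "list_all2 (prefix_le A ar) xs ys"
    unfolding list_all2_prefix_le_iff_grafts by blast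
next
  assume "list_all2 (prefix_le A ar) xs ys"
  then obtain zs where "length zs = sum_list (map nleaves xs)" "\<forall>z\<in>set zs. is_gtree A ar z"
    "ys = grafts xs zs"
    unfolding list_all2_prefix_le_iff_grafts by blast
  then show "prefix_le A ar (graft s xs) (graft s ys)"
    unfolding prefix_le_def by (auto simp: graft_graft(1)[OF xs] nleaves_graft(1)[OF xs])
qed

lemma prefix_interval_Leaf:
  "prefix_interval A ar Leaf r = {u. is_gtree A ar u \<and> prefix_le A ar u r}"
  by (auto simp: prefix_interval_def prefix_le_Leaf)

lemma mem_list_product_Leaf_intervals:
  "xs \<in> list_product (map (prefix_interval A ar Leaf) rs) \<longleftrightarrow>
     (\<forall>x\<in>set xs. is_gtree A ar x) \<and> list_all2 (prefix_le A ar) xs rs"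
  by (auto simp: list_product_def prefix_interval_Leaf list_all2_conv_all_nth all_set_conv_all_nth)

lemma poset_iso_graft:
  assumes s: "is_gtree A ar s" and rs: "length rs = nleaves s"
  shows "poset_iso (list_product (map (prefix_interval A ar Leaf) rs)) (list_all2 (prefix_le A ar))
           (prefix_interval A ar s (graft s rs)) (prefix_le A ar)"
  unfolding poset_iso_def
proof (intro exI[of _ "graft s"] conjI ballI)
  let ?P = "list_product (map (prefix_interval A ar Leaf) rs)"
  have len: "length xs = nleaves s" if "xs \<in> ?P" for xs
    using that rs by (simp add: list_product_def)
  have "inj_on (graft s) ?P"
    using graft_inject(1) len by (meson inj_onI)
  moreover have "graft s ` ?P = prefix_interval A ar s (graft s rs)"
  proof (intro equalityI subsetI)
    fix u assume "u \<in> graft s ` ?P"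
    then obtain xs where xs: "xs \<in> ?P" "u = graft s xs" by blast
    have "prefix_le A ar s u"
      using xs len[OF xs(1)] unfolding prefix_le_def
      by (auto simp: mem_list_product_Leaf_intervals)
    moreover have "prefix_le A ar u (graft s rs)" "is_gtree A ar u"
      using xs len[OF xs(1)] s rs
      by (simp_all add: mem_list_product_Leaf_intervals prefix_le_graft_graft_iff is_gtree_graft_iff(1))
    ultimately show "u \<in> prefix_interval A ar s (graft s rs)"
      by (simp add: prefix_interval_def)
  next
    fix u assume "u \<in> prefix_interval A ar s (graft s rs)"
    then have "prefix_le A ar s u" "prefix_le A ar u (graft s rs)"
      by (simp_all add: prefix_interval_def)
    then obtain xs where xs: "length xs = nleaves s" "\<forall>x\<in>set xs. is_gtree A ar x" "u = graft s xs"
      and "prefix_le A ar u (graft s rs)"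
      unfolding prefix_le_def[of A ar s u] by blast
    then have "xs \<in> ?P"
      using rs by (simp add: mem_list_product_Leaf_intervals prefix_le_graft_graft_iff)
    with xs(3) show "u \<in> graft s ` ?P" by blast
  qed
  ultimately show "bij_betw (graft s) ?P (prefix_interval A ar s (graft s rs))"
    by (simp add: bij_betw_def)
  fix xs ys assume "xs \<in> ?P" "ys \<in> ?P"
  then show "list_all2 (prefix_le A ar) xs ys \<longleftrightarrow> prefix_le A ar (graft s xs) (graft s ys)"
    using len prefix_le_graft_graft_iff by metis
qed

lemma is_gtree_mono: "is_gtree A ar z \<Longrightarrow> A \<subseteq> B \<Longrightarrow> is_gtree B ar z"
  by (induction z) auto

lemma is_gtree_Some_image_iff:
  "is_gtree (Some ` G) (ext_ar ar k) z \<longleftrightarrow> z \<in> map_gtree Some ` {a. is_gtree G ar a}"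
proof
  assume "is_gtree (Some ` G) (ext_ar ar k) z"
  then show "z \<in> map_gtree Some ` {a. is_gtree G ar a}"
  proof (induction z)
    case (Node x cs)
    then obtain a where a: "x = Some a" "a \<in> G" "length cs = ar a" by (auto simp: ext_ar_def)
    from Node have "cs \<in> lists (map_gtree Some ` {a. is_gtree G ar a})" by auto
    then obtain as where "cs = map (map_gtree Some) as" "\<forall>b\<in>set as. is_gtree G ar b"
      by (auto simp: lists_image)
    with a show ?case by (intro image_eqI[of _ _ "Node a as"]) auto
  qed (simp add: image_iff exI[of _ Leaf])
next
  assume "z \<in> map_gtree Some ` {a. is_gtree G ar a}"
  then obtain a where "is_gtree G ar a" "z = map_gtree Some a" by blast
  then show "is_gtree (Some ` G) (ext_ar ar k) z"
    by (induction a arbitrary: z) (auto simp: ext_ar_def)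
qed

lemma is_gtree_ext_alph_map_Some:
  assumes "is_gtree G ar a"
  shows "is_gtree (ext_alph G) (ext_ar ar k) (map_gtree Some a)"
proof -
  have "is_gtree (Some ` G) (ext_ar ar k) (map_gtree Some a)"
    using assms by (auto simp: is_gtree_Some_image_iff)
  then show ?thesis
    by (rule is_gtree_mono) (auto simp: ext_alph_def)
qed

lemma prefix_le_ext_alph_map_Some_iff:
  assumes b: "is_gtree G ar b"
  shows "prefix_le (ext_alph G) (ext_ar ar k) (map_gtree Some a) (map_gtree Some b) \<longleftrightarrow>
    prefix_le G ar a b"
proof
  assume "prefix_le (ext_alph G) (ext_ar ar k) (map_gtree Some a) (map_gtree Some b)"
  then obtain zs where zs: "length zs = nleaves a" "map_gtree Some b = graft (map_gtree Some a) zs"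
    unfolding prefix_le_def by auto
  have "is_gtree (Some ` G) (ext_ar ar k) (map_gtree Some b)"
    using b by (auto simp: is_gtree_Some_image_iff)
  then have "\<forall>z\<in>set zs. is_gtree (Some ` G) (ext_ar ar k) z"
    using is_gtree_graft_iff(1)[of zs "map_gtree Some a"] zs by simp
  then have "zs \<in> lists (map_gtree Some ` {a. is_gtree G ar a})"
    by (auto simp: is_gtree_Some_image_iff)
  then obtain xs where xs: "zs = map (map_gtree Some) xs" "\<forall>x\<in>set xs. is_gtree G ar x"
    by (auto simp: lists_image)
  with zs have "map_gtree Some b = map_gtree Some (graft a xs)"
    by (simp add: map_gtree_graft(1))
  then have "b = graft a xs" by (simp add: gtree.inj_map inj_eq)
  with xs zs(1) show "prefix_le G ar a b" unfolding prefix_le_def by auto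
next
  assume "prefix_le G ar a b"
  then obtain zs where "length zs = nleaves a" "\<forall>z\<in>set zs. is_gtree G ar z" "b = graft a zs"
    unfolding prefix_le_def by blast
  then show "prefix_le (ext_alph G) (ext_ar ar k) (map_gtree Some a) (map_gtree Some b)"
    unfolding prefix_le_def
    by (intro exI[of _ "map (map_gtree Some) zs"])
       (auto simp: map_gtree_graft(1) is_gtree_ext_alph_map_Some)
qed

lemma bij_betw_map_Some_Leaf_interval:
  assumes r: "is_gtree G ar r"
  shows "bij_betw (map_gtree Some) (prefix_interval G ar Leaf r)
           (prefix_interval (ext_alph G) (ext_ar ar k) Leaf (map_gtree Some r))"
  unfolding bij_betw_def
proof
  show "inj_on (map_gtree Some) (prefix_interval G ar Leaf r)"
    by (meson gtree.inj_map inj_Some inj_on_subset subset_UNIV)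
  show "map_gtree Some ` prefix_interval G ar Leaf r =
      prefix_interval (ext_alph G) (ext_ar ar k) Leaf (map_gtree Some r)"
  proof (intro equalityI subsetI)
    fix v assume "v \<in> map_gtree Some ` prefix_interval G ar Leaf r"
    then show "v \<in> prefix_interval (ext_alph G) (ext_ar ar k) Leaf (map_gtree Some r)"
      using prefix_le_ext_alph_map_Some_iff[OF r]
      by (auto simp: prefix_interval_Leaf intro: is_gtree_ext_alph_map_Some)
  next
    fix v assume v: "v \<in> prefix_interval (ext_alph G) (ext_ar ar k) Leaf (map_gtree Some r)"
    have "is_gtree (Some ` G) (ext_ar ar k) (map_gtree Some r)"
      using r is_gtree_Some_image_iff by blast
    with v have "is_gtree (Some ` G) (ext_ar ar k) v"
      by (auto simp: prefix_interval_Leaf intro: is_gtree_prefix)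
    then obtain u where "is_gtree G ar u" "v = map_gtree Some u"
      by (auto simp: is_gtree_Some_image_iff)
    with v show "v \<in> map_gtree Some ` prefix_interval G ar Leaf r"
      using prefix_le_ext_alph_map_Some_iff[OF r] by (auto simp: prefix_interval_Leaf)
  qed
qed

lemma is_gtree_corolla: "is_gtree (ext_alph G) (ext_ar ar k) (corolla k)"
  by (simp add: corolla_def ext_alph_def ext_ar_def)

lemma nleaves_corolla [simp]: "nleaves (corolla k) = k"
  by (simp add: corolla_def sum_list_replicate)

lemma grafts_replicate_Leaf: "length ys = k \<Longrightarrow> grafts (replicate k Leaf) ys = ys"
proof (induction k arbitrary: ys)
  case (Suc k)
  then show ?case by (cases ys) auto
qed simp

lemma diamond_eq_graft_corolla: "diamond rs = graft (corolla (length rs)) (map (map_gtree Some) rs)"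
  by (simp add: diamond_def corolla_def grafts_replicate_Leaf)

theorem proposition3p7:
  fixes G :: "'a set" and ar :: "'a \<Rightarrow> nat"
    and s t :: "'a gtree" and rs :: "'a gtree list"
  assumes "finite G"
    and "\<forall>a\<in>G. 1 \<le> ar a"
    and "is_gtree G ar s" and "is_gtree G ar t"
    and "prefix_le G ar s t"
    and "length rs = nleaves s" and "\<forall>r\<in>set rs. is_gtree G ar r"
    and "t = graft s rs"
  shows "poset_iso (prefix_interval G ar s t) (prefix_le G ar)
           (list_product (map (prefix_interval G ar Leaf) rs)) (list_all2 (prefix_le G ar))
       \<and> poset_iso (list_product (map (prefix_interval G ar Leaf) rs)) (list_all2 (prefix_le G ar))
           (prefix_interval (ext_alph G) (ext_ar ar (nleaves s)) (corolla (nleaves s)) (diamond rs))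
           (prefix_le (ext_alph G) (ext_ar ar (nleaves s)))"
proof
  let ?E = "ext_alph G" and ?ar = "ext_ar ar (nleaves s)" and ?rs = "map (map_gtree Some) rs"
  let ?P = "list_product (map (prefix_interval G ar Leaf) rs)"
    and ?Q = "list_product (map (prefix_interval ?E ?ar Leaf) ?rs)"
  show "poset_iso (prefix_interval G ar s t) (prefix_le G ar) ?P (list_all2 (prefix_le G ar))"
    using poset_iso_sym[OF poset_iso_graft[OF assms(3,6)]] assms(8) by simp
  have "poset_iso ?P (list_all2 (prefix_le G ar)) ?Q (list_all2 (prefix_le ?E ?ar))"
  proof (rule poset_iso_list_product[where f = "map_gtree Some"])
    fix i assume i: "i < length (map (prefix_interval G ar Leaf) rs)"
    then have r: "is_gtree G ar (rs ! i)"
      using assms(7) by simp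
    with i show "bij_betw (map_gtree Some) (map (prefix_interval G ar Leaf) rs ! i)
        (map (prefix_interval ?E ?ar Leaf) ?rs ! i)"
      using bij_betw_map_Some_Leaf_interval by simp
    fix x y
    assume "x \<in> map (prefix_interval G ar Leaf) rs ! i" "y \<in> map (prefix_interval G ar Leaf) rs ! i"
    with i show "prefix_le G ar x y \<longleftrightarrow> prefix_le ?E ?ar (map_gtree Some x) (map_gtree Some y)"
      by (auto simp: prefix_interval_Leaf prefix_le_ext_alph_map_Some_iff)
  qed simp
  moreover have "poset_iso ?Q (list_all2 (prefix_le ?E ?ar))
      (prefix_interval ?E ?ar (corolla (nleaves s)) (diamond rs)) (prefix_le ?E ?ar)"
    using poset_iso_graft[OF is_gtree_corolla, of ?rs] assms(6)
    by (simp add: diamond_eq_graft_corolla)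
  ultimately show "poset_iso ?P (list_all2 (prefix_le G ar))
      (prefix_interval ?E ?ar (corolla (nleaves s)) (diamond rs)) (prefix_le ?E ?ar)"
    by (rule poset_iso_trans)
qed

end
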